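(* Let $(M,A)$ be a $d$-dimensional BUT-manifold. Suppose $M$ is covered by a family $\mathcal F$ of $d+2$ closed subsets $C_1,\ldots,C_{d+2}$ such that $C_i\cap A(C_i)=\emptyset$ for all $i$. Let $0<k<d+2$. Then any $k$ of the subsets in $\mathcal F$ have nonempty intersection, and moreover there is a point $x$ in this intersection such that $A(x)$ belongs to the intersection of the remaining $d+2-k$ subsets of $\mathcal F$.
   Context: A BUT (Borsuk–Ulam type) manifold is a pair $(M,A)$ where $M$ is a connected compact piecewise-linear $d$-dimensional manifold without boundary and $A:M\to M$ is a free simplicial involution ($A(A(x))=x$, $A(x)\neq x$), such that for every continuous $g:M\to\mathbb{R}^d$ there is $x\in M$ with $g(A(x))=g(x)$. *)

theory Defs
  imports "HOL-Analysis.Analysis"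
begin

definition affine_on :: "'a::real_vector set \<Rightarrow> ('a \<Rightarrow> 'b::real_vector) \<Rightarrow> bool" where
  "affine_on S f \<longleftrightarrow>
     (\<forall>x\<in>S. \<forall>y\<in>S. \<forall>u::real. 0 \<le> u \<and> u \<le> 1 \<longrightarrow>
        f ((1 - u) *\<^sub>R x + u *\<^sub>R y) = (1 - u) *\<^sub>R f x + u *\<^sub>R f y)"

definition polyhedron :: "'a::euclidean_space set \<Rightarrow> bool" where
  "polyhedron P \<longleftrightarrow> (\<exists>K. simplicial_complex K \<and> \<Union>K = P)"

definition PL_homeomorphism ::
  "'a::euclidean_space set \<Rightarrow> 'b::euclidean_space set \<Rightarrow> ('a \<Rightarrow> 'b) \<Rightarrow> bool" where
  "PL_homeomorphism P Q h \<longleftrightarrow>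
     (\<exists>h'. homeomorphism P Q h h') \<and>
     (\<exists>K. simplicial_complex K \<and> \<Union>K = P \<and> (\<forall>S\<in>K. affine_on S h))"

text \<open>The type 'd plays the role of R^d.\<close>
definition PL_manifold_without_boundary :: "'d::euclidean_space itself \<Rightarrow> 'a::euclidean_space set \<Rightarrow> bool" where
  "PL_manifold_without_boundary TYPE('d) M \<longleftrightarrow>
     polyhedron M \<and>
     (\<forall>x\<in>M. \<exists>N U (h::'a \<Rightarrow> 'd). N \<subseteq> M \<and> openin (top_of_set M) U \<and> x \<in> U \<and> U \<subseteq> N \<and>
        PL_homeomorphism N (cbox 0 One) h \<and> h x \<in> box 0 One)"

definition free_simplicial_involution :: "'a::euclidean_space set \<Rightarrow> ('a \<Rightarrow> 'a) \<Rightarrow> bool" where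
  "free_simplicial_involution M A \<longleftrightarrow>
     A ` M \<subseteq> M \<and> (\<forall>x\<in>M. A (A x) = x \<and> A x \<noteq> x) \<and>
     (\<exists>K. simplicial_complex K \<and> \<Union>K = M \<and> (\<forall>S\<in>K. A ` S \<in> K \<and> affine_on S A))"

definition BUT_manifold :: "'d::euclidean_space itself \<Rightarrow> 'a::euclidean_space set \<Rightarrow> ('a \<Rightarrow> 'a) \<Rightarrow> bool" where
  "BUT_manifold TYPE('d) M A \<longleftrightarrow>
     connected M \<and> compact M \<and> PL_manifold_without_boundary TYPE('d) M \<and>
     free_simplicial_involution M A \<and>
     (\<forall>g::'a \<Rightarrow> 'd. continuous_on M g \<longrightarrow> (\<exists>x\<in>M. g (A x) = g x))"

end

theory Submission
  imports Defs
begin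

text \<open>For closed \<open>C\<close> with \<open>C \<inter> A ` C = {}\<close> the function
  \<open>u = d(\<cdot>, C) / (d(\<cdot>, C) + d(A \<cdot>, C))\<close> is continuous, satisfies \<open>u \<circ> A = 1 - u\<close>,
  vanishes exactly on \<open>C\<close> and equals \<open>1\<close> exactly where \<open>A x \<in> C\<close>. Fix \<open>i\<^sub>0 \<in> I\<close> and
  \<open>j\<^sub>0 \<notin> I\<close>. The \<open>d\<close> differences \<open>u\<^sub>l - u\<^sub>i\<^sub>0\<close> (\<open>l \<in> I\<close>) and \<open>u\<^sub>l - u\<^sub>j\<^sub>0\<close> (\<open>l \<notin> I\<close>),
  \<open>l \<noteq> i\<^sub>0, j\<^sub>0\<close>, are odd with respect to \<open>A\<close>, so by the BUT property they have a common
  zero \<open>x\<close>. At \<open>x\<close> all \<open>u\<^sub>i\<close> with \<open>i \<in> I\<close> agree, and so do all \<open>u\<^sub>j\<close> with \<open>j \<notin> I\<close>; since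
  \<open>x\<close> and \<open>A x\<close> are both covered, one common value is \<open>0\<close> and the other \<open>1\<close>, which puts
  \<open>x\<close> or \<open>A x\<close> into the required intersection.\<close>

lemma affine_on_subset: "affine_on S f \<Longrightarrow> T \<subseteq> S \<Longrightarrow> affine_on T f"
  unfolding affine_on_def by blast

lemma affine_on_convex_hull_eq:
  fixes f g :: "'a::real_vector \<Rightarrow> 'b::real_vector"
  assumes "finite V" "affine_on (convex hull V) f" "affine_on (convex hull V) g"
    and "\<And>v. v \<in> V \<Longrightarrow> f v = g v"
    and "x \<in> convex hull V"
  shows "f x = g x"
  using assms
proof (induction V arbitrary: x rule: finite_induct)
  case empty
  then show ?case by simp
next
  case (insert a V)
  show ?case
  proof (cases "V = {}")
    case True
    then show ?thesis using insert.prems by simp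
  next
    case False
    have sub: "convex hull V \<subseteq> convex hull (insert a V)"
      by (simp add: hull_mono subset_insertI)
    have a: "a \<in> convex hull (insert a V)"
      by (simp add: hull_inc)
    obtain u b where ub: "0 \<le> u" "u \<le> 1" "b \<in> convex hull V" "x = (1 - u) *\<^sub>R a + u *\<^sub>R b"
      using insert.prems(4) convex_hull_insert[OF False] by (auto simp: eq_diff_eq')
    have "f b = g b"
      using insert.IH[OF _ _ _ ub(3)] insert.prems(1-3) affine_on_subset[OF _ sub] by auto
    moreover have "f x = (1 - u) *\<^sub>R f a + u *\<^sub>R f b" "g x = (1 - u) *\<^sub>R g a + u *\<^sub>R g b"
      using insert.prems(1,2) a ub sub unfolding affine_on_def by auto
    ultimately show ?thesis
      using insert.prems(3) by simp
  qed
qed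

lemma affine_on_linear_offset:
  assumes "linear g"
  shows "affine_on S (\<lambda>x. c + g (x - a))"
  unfolding affine_on_def
proof (intro ballI allI impI)
  fix x y and u :: real
  have "(1 - u) *\<^sub>R x + u *\<^sub>R y - a = (1 - u) *\<^sub>R (x - a) + u *\<^sub>R (y - a)"
    by (simp add: algebra_simps)
  then have "g ((1 - u) *\<^sub>R x + u *\<^sub>R y - a) = (1 - u) *\<^sub>R g (x - a) + u *\<^sub>R g (y - a)"
    using assms by (simp add: linear_add linear_cmul)
  then show "c + g ((1 - u) *\<^sub>R x + u *\<^sub>R y - a) = (1 - u) *\<^sub>R (c + g (x - a)) + u *\<^sub>R (c + g (y - a))"
    by (simp add: algebra_simps)
qed

lemma continuous_on_simplex_affine_on:
  fixes f :: "'a::euclidean_space \<Rightarrow> 'b::euclidean_space"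
  assumes "n simplex S" "affine_on S f"
  shows "continuous_on S f"
proof -
  obtain V where V: "finite V" "\<not> affine_dependent V" "S = convex hull V"
    using assms(1) unfolding simplex by auto
  show ?thesis
  proof (cases "V = {}")
    case True
    then show ?thesis using V by simp
  next
    case False
    then obtain a where a: "a \<in> V" by auto
    have "\<not> dependent ((\<lambda>x. - a + x) ` (V - {a}))"
      using affine_dependent_iff_dependent2[OF a] V(2) by simp
    then obtain g where g: "linear g" "\<And>y. y \<in> (\<lambda>x. - a + x) ` (V - {a}) \<Longrightarrow> g y = f (y + a) - f a"
      using linear_independent_extend[of _ "\<lambda>y. f (y + a) - f a"] by blast
    define L where "L x = f a + g (x - a)" for x
    have "f v = L v" if "v \<in> V" for v
    proof (cases "v = a")
      case True
      then show ?thesis by (simp add: L_def linear_0[OF g(1)])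
    next
      case False
      then have "g (- a + v) = f v - f a" using g(2) that by auto
      then show ?thesis by (simp add: L_def)
    qed
    then have "\<forall>x\<in>S. f x = L x"
      using affine_on_convex_hull_eq[OF V(1)] assms(2) affine_on_linear_offset[OF g(1)] V(3)
      unfolding L_def by blast
    moreover have "continuous_on S L"
      unfolding L_def by (intro continuous_intros linear_continuous_on_compose[OF _ g(1)])
    ultimately show ?thesis
      using continuous_on_cong by blast
  qed
qed

lemma continuous_on_simplicial_complex_affine_on:
  fixes f :: "'a::euclidean_space \<Rightarrow> 'b::euclidean_space"
  assumes "simplicial_complex K" "\<And>S. S \<in> K \<Longrightarrow> affine_on S f"
  shows "continuous_on (\<Union>K) f"
proof -
  have "continuous_on (\<Union>S\<in>K. S) f"
  proof (rule continuous_on_closed_Union)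
    show "finite K"
      using assms(1) unfolding simplicial_complex_def by auto
  next
    fix S assume "S \<in> K"
    then obtain n where n: "n simplex S"
      using assms(1) unfolding simplicial_complex_def by auto
    then show "closed S"
      unfolding simplex by (auto intro: compact_imp_closed finite_imp_compact_convex_hull)
    show "continuous_on S f"
      using continuous_on_simplex_affine_on[OF n] assms(2) \<open>S \<in> K\<close> by blast
  qed
  then show ?thesis by simp
qed

text \<open>Unlike \<open>infdist x {} = 0\<close>, the distance to the empty set is taken to be positive.\<close>
definition distance_to :: "'a::metric_space set \<Rightarrow> 'a \<Rightarrow> real" where
  "distance_to C x = (if C = {} then 1 else infdist x C)"

definition antipodal_ratio :: "('a::metric_space \<Rightarrow> 'a) \<Rightarrow> 'a set \<Rightarrow> 'a \<Rightarrow> real" where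
  "antipodal_ratio A C x = distance_to C x / (distance_to C x + distance_to C (A x))"

lemma distance_to_nonneg: "0 \<le> distance_to C x"
  by (simp add: distance_to_def infdist_nonneg)

lemma distance_to_eq_0_iff: "closed C \<Longrightarrow> distance_to C x = 0 \<longleftrightarrow> x \<in> C"
  by (simp add: distance_to_def in_closed_iff_infdist_zero)

lemma continuous_on_distance_to: "continuous_on S (distance_to C)"
  unfolding distance_to_def by (cases "C = {}") (auto intro!: continuous_intros)

context
  fixes A :: "'a::metric_space \<Rightarrow> 'a" and C :: "'a set"
  assumes closed: "closed C" and disjoint: "C \<inter> A ` C = {}"
begin

lemma distance_to_antipodal_sum_pos: "0 < distance_to C x + distance_to C (A x)"
proof -
  have "\<not> (distance_to C x = 0 \<and> distance_to C (A x) = 0)"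
    using disjoint by (auto simp: distance_to_eq_0_iff[OF closed])
  then show ?thesis
    using distance_to_nonneg[of C x] distance_to_nonneg[of C "A x"] by linarith
qed

lemma antipodal_ratio_eq_0_iff: "antipodal_ratio A C x = 0 \<longleftrightarrow> x \<in> C"
  using distance_to_antipodal_sum_pos[of x]
  by (simp add: antipodal_ratio_def distance_to_eq_0_iff[OF closed])

lemma antipodal_ratio_involution:
  assumes "A (A x) = x"
  shows "antipodal_ratio A C (A x) = 1 - antipodal_ratio A C x"
  using distance_to_antipodal_sum_pos[of x] assms
  by (simp add: antipodal_ratio_def field_simps)

lemma antipodal_ratio_eq_1_iff:
  assumes "A (A x) = x"
  shows "antipodal_ratio A C x = 1 \<longleftrightarrow> A x \<in> C"
  using antipodal_ratio_involution[OF assms] antipodal_ratio_eq_0_iff[of "A x"] by linarith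

lemma continuous_on_antipodal_ratio:
  assumes "continuous_on M A" "A ` M \<subseteq> M"
  shows "continuous_on M (antipodal_ratio A C)"
proof -
  have "continuous_on M (\<lambda>x. distance_to C (A x))"
    using continuous_on_compose2[OF continuous_on_distance_to assms(1,2)] .
  then show ?thesis
    unfolding antipodal_ratio_def
    using distance_to_antipodal_sum_pos
    by (intro continuous_intros continuous_on_distance_to) (auto simp: less_le)
qed

end

lemma inner_sum_Basis_inj:
  assumes "finite T" "e ` T \<subseteq> Basis" "inj_on e T" "s \<in> T"
  shows "(\<Sum>t\<in>T. c t *\<^sub>R e t) \<bullet> e s = c s"
proof -
  have "(\<Sum>t\<in>T. c t *\<^sub>R e t) \<bullet> e s = (\<Sum>t\<in>T. if t = s then c t else 0)"
    unfolding inner_sum_left inner_scaleR_left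
  proof (rule sum.cong)
    fix t assume "t \<in> T"
    then have "e t = e s \<longleftrightarrow> t = s" "e t \<in> Basis" "e s \<in> Basis"
      using assms(2-4) inj_on_eq_iff by fastforce+
    then show "c t * (e t \<bullet> e s) = (if t = s then c t else 0)"
      by (simp add: inner_Basis)
  qed simp
  then show ?thesis
    using assms(1,4) by simp
qed

lemma BUT_common_zero_of_odd_functions:
  fixes M :: "'a::topological_space set" and v :: "'i \<Rightarrow> 'a \<Rightarrow> real"
  assumes BUT: "\<And>g :: 'a \<Rightarrow> 'd::euclidean_space. continuous_on M g \<Longrightarrow> \<exists>x\<in>M. g (A x) = g x"
    and "finite T" "card T \<le> DIM('d)"
    and cont: "\<And>t. t \<in> T \<Longrightarrow> continuous_on M (v t)"
    and odd: "\<And>t x. t \<in> T \<Longrightarrow> x \<in> M \<Longrightarrow> v t (A x) = - v t x"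
  shows "\<exists>x\<in>M. \<forall>t\<in>T. v t x = 0"
proof -
  obtain e :: "'i \<Rightarrow> 'd" where e: "e ` T \<subseteq> Basis" "inj_on e T"
    using card_le_inj[OF \<open>finite T\<close> finite_Basis \<open>card T \<le> DIM('d)\<close>] by blast
  define g where "g x = (\<Sum>t\<in>T. v t x *\<^sub>R e t)" for x
  have "continuous_on M g"
    unfolding g_def using cont by (intro continuous_intros) auto
  then obtain x where x: "x \<in> M" "g (A x) = g x"
    using BUT by blast
  have "v t x = 0" if "t \<in> T" for t
  proof -
    have "v t (A x) = v t x"
      using arg_cong[OF x(2), of "\<lambda>y. y \<bullet> e t"] inner_sum_Basis_inj[OF \<open>finite T\<close> e that]
      unfolding g_def by simp
    then show ?thesis
      using odd[OF that x(1)] by simp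
  qed
  then show ?thesis
    using x(1) by blast
qed

lemma BUT_coincidence_along_map:
  fixes M :: "'a::topological_space set" and u :: "'i \<Rightarrow> 'a \<Rightarrow> real"
  assumes BUT: "\<And>g :: 'a \<Rightarrow> 'd::euclidean_space. continuous_on M g \<Longrightarrow> \<exists>x\<in>M. g (A x) = g x"
    and "finite L" "r ` L \<subseteq> L" "card {l \<in> L. r l \<noteq> l} \<le> DIM('d)"
    and cont: "\<And>l. l \<in> L \<Longrightarrow> continuous_on M (u l)"
    and flip: "\<And>l x. l \<in> L \<Longrightarrow> x \<in> M \<Longrightarrow> u l (A x) = 1 - u l x"
  shows "\<exists>x\<in>M. \<forall>l\<in>L. u l x = u (r l) x"
proof -
  have "\<exists>x\<in>M. \<forall>t\<in>{l \<in> L. r l \<noteq> l}. u t x - u (r t) x = 0"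
  proof (rule BUT_common_zero_of_odd_functions[OF BUT])
    fix t x assume "t \<in> {l \<in> L. r l \<noteq> l}" "x \<in> M"
    then show "u t (A x) - u (r t) (A x) = - (u t x - u (r t) x)"
      using flip assms(3) by auto
  qed (use assms in \<open>auto intro!: continuous_intros\<close>)
  then obtain x where x: "x \<in> M" "\<forall>t\<in>{l \<in> L. r l \<noteq> l}. u t x - u (r t) x = 0"
    by blast
  have "u l x = u (r l) x" if "l \<in> L" for l
    using bspec[OF x(2), of l] that by (cases "r l = l") auto
  then show ?thesis
    using x(1) by blast
qed

lemma cover_intersection_of_equal_antipodal_ratios:
  fixes C :: "'i \<Rightarrow> 'a::metric_space set"
  assumes A: "A ` M \<subseteq> M" "A (A x) = x" and x: "x \<in> M"
    and closed: "\<And>l. l \<in> L \<Longrightarrow> closed (C l)"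
    and cover: "M \<subseteq> (\<Union>l\<in>L. C l)"
    and disjoint: "\<And>l. l \<in> L \<Longrightarrow> C l \<inter> A ` C l = {}"
    and I: "I \<subseteq> L" "i0 \<in> I" "j0 \<in> L - I"
    and I_vals: "\<And>i. i \<in> I \<Longrightarrow> antipodal_ratio A (C i) x = antipodal_ratio A (C i0) x"
    and J_vals: "\<And>j. j \<in> L - I \<Longrightarrow> antipodal_ratio A (C j) x = antipodal_ratio A (C j0) x"
  shows "\<exists>y\<in>M. (\<forall>i\<in>I. y \<in> C i) \<and> (\<forall>j\<in>L - I. A y \<in> C j)"
proof -
  define u where "u l = antipodal_ratio A (C l) x" for l
  have in_C: "x \<in> C l \<longleftrightarrow> u l = 0" if "l \<in> L" for l
    unfolding u_def using antipodal_ratio_eq_0_iff[OF closed disjoint] that by blast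
  have in_AC: "A x \<in> C l \<longleftrightarrow> u l = 1" if "l \<in> L" for l
    unfolding u_def using antipodal_ratio_eq_1_iff[OF closed disjoint A(2)] that by blast
  have "u i0 = 0 \<or> u j0 = 0"
  proof -
    obtain l where "l \<in> L" "x \<in> C l"
      using cover x by blast
    then show ?thesis
      using in_C I_vals J_vals unfolding u_def by (metis DiffI)
  qed
  moreover have "u i0 = 1 \<or> u j0 = 1"
  proof -
    obtain l where "l \<in> L" "A x \<in> C l"
      using cover A(1) x by blast
    then show ?thesis
      using in_AC I_vals J_vals unfolding u_def by (metis DiffI)
  qed
  ultimately consider "u i0 = 0" "u j0 = 1" | "u i0 = 1" "u j0 = 0"
    by fastforce
  then show ?thesis
  proof cases
    case 1
    then have "(\<forall>i\<in>I. x \<in> C i) \<and> (\<forall>j\<in>L - I. A x \<in> C j)"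
      using in_C in_AC I_vals J_vals I(1) unfolding u_def by (metis DiffD1 subsetD)
    then show ?thesis
      using x by blast
  next
    case 2
    then have "(\<forall>i\<in>I. A x \<in> C i) \<and> (\<forall>j\<in>L - I. A (A x) \<in> C j)"
      using in_C in_AC I_vals J_vals I(1) A(2) unfolding u_def by (metis DiffD1 subsetD)
    then show ?thesis
      using x A(1) by blast
  qed
qed

lemma BUT_cover_intersection:
  fixes M :: "'a::metric_space set" and C :: "'i \<Rightarrow> 'a set"
  assumes BUT: "\<And>g :: 'a \<Rightarrow> 'd::euclidean_space. continuous_on M g \<Longrightarrow> \<exists>x\<in>M. g (A x) = g x"
    and A: "continuous_on M A" "A ` M \<subseteq> M" "\<And>x. x \<in> M \<Longrightarrow> A (A x) = x"
    and L: "finite L" "card L \<le> DIM('d) + 2"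
    and closed: "\<And>l. l \<in> L \<Longrightarrow> closed (C l)"
    and cover: "M \<subseteq> (\<Union>l\<in>L. C l)"
    and disjoint: "\<And>l. l \<in> L \<Longrightarrow> C l \<inter> A ` C l = {}"
    and I: "I \<subseteq> L" "I \<noteq> {}" "I \<noteq> L"
  shows "\<exists>x\<in>M. (\<forall>i\<in>I. x \<in> C i) \<and> (\<forall>j\<in>L - I. A x \<in> C j)"
proof -
  obtain i0 j0 where i0: "i0 \<in> I" and j0: "j0 \<in> L - I"
    using I by blast
  define u where "u l = antipodal_ratio A (C l)" for l
  define r where "r l = (if l \<in> I then i0 else j0)" for l
  have "card {i0, j0} = 2"
    using i0 j0 by (cases "i0 = j0") auto
  then have "card (L - {i0, j0}) \<le> DIM('d)"
    using L i0 j0 I(1) by (subst card_Diff_subset) auto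
  moreover have "{l \<in> L. r l \<noteq> l} \<subseteq> L - {i0, j0}"
    using i0 j0 unfolding r_def by auto
  ultimately have "card {l \<in> L. r l \<noteq> l} \<le> DIM('d)"
    using card_mono[OF finite_Diff[OF L(1)]] le_trans by blast
  moreover have "r ` L \<subseteq> L"
    using i0 j0 I(1) unfolding r_def by auto
  moreover have "continuous_on M (u l)" if "l \<in> L" for l
    unfolding u_def using that A(1,2) closed disjoint by (intro continuous_on_antipodal_ratio)
  moreover have "u l (A y) = 1 - u l y" if "l \<in> L" "y \<in> M" for l y
    unfolding u_def using antipodal_ratio_involution[OF closed disjoint] that A(3) by blast
  ultimately obtain x where x: "x \<in> M" and blocks: "\<forall>l\<in>L. u l x = u (r l) x"
    using BUT_coincidence_along_map[OF BUT L(1), of r u] by blast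
  show ?thesis
  proof (rule cover_intersection_of_equal_antipodal_ratios
      [OF A(2) A(3)[OF x] x closed cover disjoint I(1) i0 j0])
    show "antipodal_ratio A (C i) x = antipodal_ratio A (C i0) x" if "i \<in> I" for i
      using bspec[OF blocks, of i] that I(1) unfolding u_def r_def by auto
    show "antipodal_ratio A (C j) x = antipodal_ratio A (C j0) x" if "j \<in> L - I" for j
      using bspec[OF blocks, of j] that unfolding u_def r_def by auto
  qed
qed

theorem theorem4p2:
  fixes M :: "'a::euclidean_space set" and A :: "'a \<Rightarrow> 'a"
    and C :: "nat \<Rightarrow> 'a set" and k :: nat
  assumes "BUT_manifold TYPE('d::euclidean_space) M A"
    and "\<And>i. i \<in> {1..DIM('d) + 2} \<Longrightarrow> closedin (top_of_set M) (C i)"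
    and "(\<Union>i\<in>{1..DIM('d) + 2}. C i) = M"
    and "\<And>i. i \<in> {1..DIM('d) + 2} \<Longrightarrow> C i \<inter> A ` (C i) = {}"
    and "0 < k" and "k < DIM('d) + 2"
  shows "\<forall>I. I \<subseteq> {1..DIM('d) + 2} \<and> card I = k \<longrightarrow>
           (\<Inter>i\<in>I. C i) \<noteq> {} \<and>
           (\<exists>x\<in>M. (\<forall>i\<in>I. x \<in> C i) \<and> (\<forall>i\<in>{1..DIM('d) + 2} - I. A x \<in> C i))"
proof (intro allI impI)
  fix I assume I: "I \<subseteq> {1..DIM('d) + 2} \<and> card I = k"
  have "compact M" and "free_simplicial_involution M A"
    and BUT: "\<And>g :: 'a \<Rightarrow> 'd. continuous_on M g \<Longrightarrow> \<exists>x\<in>M. g (A x) = g x"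
    using assms(1) unfolding BUT_manifold_def by simp_all
  then obtain K where A: "A ` M \<subseteq> M" "\<And>x. x \<in> M \<Longrightarrow> A (A x) = x"
    and K: "simplicial_complex K" "\<Union>K = M" "\<And>S. S \<in> K \<Longrightarrow> affine_on S A"
    unfolding free_simplicial_involution_def by auto
  have "continuous_on M A"
    using continuous_on_simplicial_complex_affine_on[OF K(1,3)] K(2) by simp
  moreover have "closed (C i)" if "i \<in> {1..DIM('d) + 2}" for i
    using assms(2)[OF that] closedin_closed_trans compact_imp_closed \<open>compact M\<close> by blast
  moreover have "card {1..DIM('d) + 2} \<le> DIM('d) + 2"
    by simp
  moreover have "I \<subseteq> {1..DIM('d) + 2}" "I \<noteq> {}" "I \<noteq> {1..DIM('d) + 2}"
    using I assms(5,6) by auto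
  ultimately obtain x where "x \<in> M" "\<forall>i\<in>I. x \<in> C i" "\<forall>j\<in>{1..DIM('d) + 2} - I. A x \<in> C j"
    using BUT_cover_intersection[OF BUT _ A finite_atLeastAtMost _ _ equalityD2[OF assms(3)] assms(4)]
    by blast
  then show "(\<Inter>i\<in>I. C i) \<noteq> {} \<and>
      (\<exists>x\<in>M. (\<forall>i\<in>I. x \<in> C i) \<and> (\<forall>i\<in>{1..DIM('d) + 2} - I. A x \<in> C i))"
    by blast
qed

end
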